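(* Let QH4 be the calculus obtained from intuitionistic predicate calculus QH by adding a unary connective $\nabla$ on problems and the postulate schemes $\alpha\to\nabla\alpha$, $\nabla\nabla\alpha\to\nabla\alpha$, $\nabla\bot\to\bot$, $\nabla(\alpha\to\beta)\to(\nabla\alpha\to\nabla\beta)$ (with the postulates and rules of QH applied to all formulas, including those containing $\nabla$). Then the translation replacing every occurrence of $\nabla$ by $!?$ is a syntactic interpretation of QH4 in QHC (every law, and every derivable rule, of QH4 is sent to a law, resp. derivable rule, of QHC), and it is the identity on formulas of QH.
   Context: QHC is a two-sorted first-order calculus. Its only terms are individual variables. Every formula is either a problem (denoted by Greek letters $\alpha,\beta,\gamma,\dots$) or a proposition (denoted by Latin letters $p,q,\dots$). Atomic formulas are proposition variables $p(t_1,\dots,t_n)$ (of proposition type), problem variables $\pi(t_1,\dots,t_n)$ (of problem type), and the constants $0$ (a proposition, classical falsity) and $\bot$ (a problem, intuitionistic absurdity). Propositions are closed under the classical connectives $\land,\lor,\to$ and quantifiers $\exists,\forall$; problems are closed under the intuitionistic connectives $\land,\lor,\to$ and quantifiers $\exists,\forall$ (the same symbols are used, distinguished by the type of the arguments). $\neg p$ abbreviates $p\to 0$, $\neg\alpha$ abbreviates $\alpha\to\bot$, and $\leftrightarrow$ is defined as usual. There are two type-conversion operators: if $p$ is a proposition then $!p$ is a problem, and if $\alpha$ is a problem then $?\alpha$ is a proposition. Deductive system of QHC: all axioms and rules of classical predicate logic applied to all propositions; all postulates and rules of intuitionistic predicate logic applied to all problems; the rules $p\,/\,!p$ and $\alpha\,/\,?\alpha$;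 and the schemas $?!p\to p$; $\alpha\to\, !?\alpha$; $!(p\to q)\to(!p\to !q)$; $?(\alpha\to\beta)\to(?\alpha\to ?\beta)$; $!0\to\bot$; $?(\alpha\land\beta)\leftrightarrow ?\alpha\land ?\beta$; $?(\alpha\lor\beta)\leftrightarrow ?\alpha\lor ?\beta$; $?\bot\to 0$; $?\exists x\,\alpha(x)\leftrightarrow\exists x\,?\alpha(x)$; $?\forall x\,\alpha(x)\to\forall x\,?\alpha(x)$ (usual variable side conditions implicit). $\vdash A$ means $A$ is derivable in QHC; $A\Rightarrow B$ means $\vdash A\to B$ and $A\Leftrightarrow B$ means $\vdash A\leftrightarrow B$ (with $A,B$ of the same type); $A\vdash B$ means $B$ is derivable in QHC from the premise $A$. Notation: $\Box p := ?!p$ (a proposition) and $\nabla\alpha := !?\alpha$ (a problem). QC and QH denote classical and intuitionistic predicate calculus. *)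

theory Defs
  imports Main
begin

text \<open>Individual variables and predicate names are natural numbers; the only
terms are individual variables. A predicate variable applied to a list of
variables is an atomic formula (distinct argument-list lengths give
distinct atoms).\<close>

type_synonym ivar = nat

datatype propn =
    PVar nat "ivar list"
  | PFalse
  | PAnd propn propn
  | POr propn propn
  | PImp propn propn
  | PEx ivar propn
  | PAll ivar propn
  | Quest probl
and probl =
    QVar nat "ivar list"
  | QBot
  | QAnd probl probl
  | QOr probl probl
  | QImp probl probl
  | QEx ivar probl
  | QAll ivar probl
  | Bang propn

text \<open>Formulas of QHC of either sort.\<close>
datatype qfm = FP propn | FQ probl

datatype fm4 =
    Var4 nat "ivar list"
  | Bot4
  | And4 fm4 fm4
  | Or4 fm4 fm4
  | Imp4 fm4 fm4
  | Ex4 ivar fm4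
  | All4 ivar fm4
  | Nabla4 fm4

definition rn :: "ivar \<Rightarrow> ivar \<Rightarrow> ivar \<Rightarrow> ivar" where
  "rn x y t = (if t = x then y else t)"

fun fv_p :: "propn \<Rightarrow> ivar set" and fv_q :: "probl \<Rightarrow> ivar set" where
  "fv_p (PVar n ts) = set ts"
| "fv_p PFalse = {}"
| "fv_p (PAnd a b) = fv_p a \<union> fv_p b"
| "fv_p (POr a b) = fv_p a \<union> fv_p b"
| "fv_p (PImp a b) = fv_p a \<union> fv_p b"
| "fv_p (PEx z a) = fv_p a - {z}"
| "fv_p (PAll z a) = fv_p a - {z}"
| "fv_p (Quest a) = fv_q a"
| "fv_q (QVar n ts) = set ts"
| "fv_q QBot = {}"
| "fv_q (QAnd a b) = fv_q a \<union> fv_q b"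
| "fv_q (QOr a b) = fv_q a \<union> fv_q b"
| "fv_q (QImp a b) = fv_q a \<union> fv_q b"
| "fv_q (QEx z a) = fv_q a - {z}"
| "fv_q (QAll z a) = fv_q a - {z}"
| "fv_q (Bang a) = fv_p a"

fun sb_p :: "ivar \<Rightarrow> ivar \<Rightarrow> propn \<Rightarrow> propn"
and sb_q :: "ivar \<Rightarrow> ivar \<Rightarrow> probl \<Rightarrow> probl" where
  "sb_p x y (PVar n ts) = PVar n (map (rn x y) ts)"
| "sb_p x y PFalse = PFalse"
| "sb_p x y (PAnd a b) = PAnd (sb_p x y a) (sb_p x y b)"
| "sb_p x y (POr a b) = POr (sb_p x y a) (sb_p x y b)"
| "sb_p x y (PImp a b) = PImp (sb_p x y a) (sb_p x y b)"
| "sb_p x y (PEx z a) = (if z = x then PEx z a else PEx z (sb_p x y a))"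
| "sb_p x y (PAll z a) = (if z = x then PAll z a else PAll z (sb_p x y a))"
| "sb_p x y (Quest a) = Quest (sb_q x y a)"
| "sb_q x y (QVar n ts) = QVar n (map (rn x y) ts)"
| "sb_q x y QBot = QBot"
| "sb_q x y (QAnd a b) = QAnd (sb_q x y a) (sb_q x y b)"
| "sb_q x y (QOr a b) = QOr (sb_q x y a) (sb_q x y b)"
| "sb_q x y (QImp a b) = QImp (sb_q x y a) (sb_q x y b)"
| "sb_q x y (QEx z a) = (if z = x then QEx z a else QEx z (sb_q x y a))"
| "sb_q x y (QAll z a) = (if z = x then QAll z a else QAll z (sb_q x y a))"
| "sb_q x y (Bang a) = Bang (sb_p x y a)"

text \<open>\<open>ff_p x y A\<close>: y is free for x in A (substitution creates no capture).\<close>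
fun ff_p :: "ivar \<Rightarrow> ivar \<Rightarrow> propn \<Rightarrow> bool"
and ff_q :: "ivar \<Rightarrow> ivar \<Rightarrow> probl \<Rightarrow> bool" where
  "ff_p x y (PVar n ts) = True"
| "ff_p x y PFalse = True"
| "ff_p x y (PAnd a b) = (ff_p x y a \<and> ff_p x y b)"
| "ff_p x y (POr a b) = (ff_p x y a \<and> ff_p x y b)"
| "ff_p x y (PImp a b) = (ff_p x y a \<and> ff_p x y b)"
| "ff_p x y (PEx z a) = (z = x \<or> (ff_p x y a \<and> (x \<in> fv_p a \<longrightarrow> z \<noteq> y)))"
| "ff_p x y (PAll z a) = (z = x \<or> (ff_p x y a \<and> (x \<in> fv_p a \<longrightarrow> z \<noteq> y)))"
| "ff_p x y (Quest a) = ff_q x y a"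
| "ff_q x y (QVar n ts) = True"
| "ff_q x y QBot = True"
| "ff_q x y (QAnd a b) = (ff_q x y a \<and> ff_q x y b)"
| "ff_q x y (QOr a b) = (ff_q x y a \<and> ff_q x y b)"
| "ff_q x y (QImp a b) = (ff_q x y a \<and> ff_q x y b)"
| "ff_q x y (QEx z a) = (z = x \<or> (ff_q x y a \<and> (x \<in> fv_q a \<longrightarrow> z \<noteq> y)))"
| "ff_q x y (QAll z a) = (z = x \<or> (ff_q x y a \<and> (x \<in> fv_q a \<longrightarrow> z \<noteq> y)))"
| "ff_q x y (Bang a) = ff_p x y a"

fun fv4 :: "fm4 \<Rightarrow> ivar set" where
  "fv4 (Var4 n ts) = set ts"
| "fv4 Bot4 = {}"
| "fv4 (And4 a b) = fv4 a \<union> fv4 b"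
| "fv4 (Or4 a b) = fv4 a \<union> fv4 b"
| "fv4 (Imp4 a b) = fv4 a \<union> fv4 b"
| "fv4 (Ex4 z a) = fv4 a - {z}"
| "fv4 (All4 z a) = fv4 a - {z}"
| "fv4 (Nabla4 a) = fv4 a"

fun sb4 :: "ivar \<Rightarrow> ivar \<Rightarrow> fm4 \<Rightarrow> fm4" where
  "sb4 x y (Var4 n ts) = Var4 n (map (rn x y) ts)"
| "sb4 x y Bot4 = Bot4"
| "sb4 x y (And4 a b) = And4 (sb4 x y a) (sb4 x y b)"
| "sb4 x y (Or4 a b) = Or4 (sb4 x y a) (sb4 x y b)"
| "sb4 x y (Imp4 a b) = Imp4 (sb4 x y a) (sb4 x y b)"
| "sb4 x y (Ex4 z a) = (if z = x then Ex4 z a else Ex4 z (sb4 x y a))"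
| "sb4 x y (All4 z a) = (if z = x then All4 z a else All4 z (sb4 x y a))"
| "sb4 x y (Nabla4 a) = Nabla4 (sb4 x y a)"

fun ff4 :: "ivar \<Rightarrow> ivar \<Rightarrow> fm4 \<Rightarrow> bool" where
  "ff4 x y (Var4 n ts) = True"
| "ff4 x y Bot4 = True"
| "ff4 x y (And4 a b) = (ff4 x y a \<and> ff4 x y b)"
| "ff4 x y (Or4 a b) = (ff4 x y a \<and> ff4 x y b)"
| "ff4 x y (Imp4 a b) = (ff4 x y a \<and> ff4 x y b)"
| "ff4 x y (Ex4 z a) = (z = x \<or> (ff4 x y a \<and> (x \<in> fv4 a \<longrightarrow> z \<noteq> y)))"
| "ff4 x y (All4 z a) = (z = x \<or> (ff4 x y a \<and> (x \<in> fv4 a \<longrightarrow> z \<noteq> y)))"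
| "ff4 x y (Nabla4 a) = ff4 x y a"

definition PIff :: "propn \<Rightarrow> propn \<Rightarrow> propn" where
  "PIff a b = PAnd (PImp a b) (PImp b a)"
definition QIff :: "probl \<Rightarrow> probl \<Rightarrow> probl" where
  "QIff a b = QAnd (QImp a b) (QImp b a)"

inductive ax_QC :: "propn \<Rightarrow> bool" where
  "ax_QC (PImp a (PImp b a))"
| "ax_QC (PImp (PImp a (PImp b c)) (PImp (PImp a b) (PImp a c)))"
| "ax_QC (PImp (PAnd a b) a)"
| "ax_QC (PImp (PAnd a b) b)"
| "ax_QC (PImp a (PImp b (PAnd a b)))"
| "ax_QC (PImp a (POr a b))"
| "ax_QC (PImp b (POr a b))"
| "ax_QC (PImp (PImp a c) (PImp (PImp b c) (PImp (POr a b) c)))"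
| "ax_QC (PImp PFalse a)"
| "ax_QC (PImp (PImp (PImp a PFalse) PFalse) a)"
| "ff_p x y a \<Longrightarrow> ax_QC (PImp (PAll x a) (sb_p x y a))"
| "ff_p x y a \<Longrightarrow> ax_QC (PImp (sb_p x y a) (PEx x a))"

inductive ax_QH :: "probl \<Rightarrow> bool" where
  "ax_QH (QImp a (QImp b a))"
| "ax_QH (QImp (QImp a (QImp b c)) (QImp (QImp a b) (QImp a c)))"
| "ax_QH (QImp (QAnd a b) a)"
| "ax_QH (QImp (QAnd a b) b)"
| "ax_QH (QImp a (QImp b (QAnd a b)))"
| "ax_QH (QImp a (QOr a b))"
| "ax_QH (QImp b (QOr a b))"
| "ax_QH (QImp (QImp a c) (QImp (QImp b c) (QImp (QOr a b) c)))"
| "ax_QH (QImp QBot a)"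
| "ff_q x y a \<Longrightarrow> ax_QH (QImp (QAll x a) (sb_q x y a))"
| "ff_q x y a \<Longrightarrow> ax_QH (QImp (sb_q x y a) (QEx x a))"

inductive ax_conv :: "qfm \<Rightarrow> bool" where
  "ax_conv (FP (PImp (Quest (Bang p)) p))"
| "ax_conv (FQ (QImp a (Bang (Quest a))))"
| "ax_conv (FQ (QImp (Bang (PImp p q)) (QImp (Bang p) (Bang q))))"
| "ax_conv (FP (PImp (Quest (QImp a b)) (PImp (Quest a) (Quest b))))"
| "ax_conv (FQ (QImp (Bang PFalse) QBot))"
| "ax_conv (FP (PIff (Quest (QAnd a b)) (PAnd (Quest a) (Quest b))))"
| "ax_conv (FP (PIff (Quest (QOr a b)) (POr (Quest a) (Quest b))))"
| "ax_conv (FP (PImp (Quest QBot) PFalse))"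
| "ax_conv (FP (PIff (Quest (QEx x a)) (PEx x (Quest a))))"
| "ax_conv (FP (PImp (Quest (QAll x a)) (PAll x (Quest a))))"

inductive qhc_der :: "qfm set \<Rightarrow> qfm \<Rightarrow> bool" where
  hyp: "A \<in> \<Gamma> \<Longrightarrow> qhc_der \<Gamma> A"
| axp: "ax_QC p \<Longrightarrow> qhc_der \<Gamma> (FP p)"
| axq: "ax_QH a \<Longrightarrow> qhc_der \<Gamma> (FQ a)"
| axc: "ax_conv A \<Longrightarrow> qhc_der \<Gamma> A"
| mpp: "qhc_der \<Gamma> (FP (PImp p q)) \<Longrightarrow> qhc_der \<Gamma> (FP p) \<Longrightarrow> qhc_der \<Gamma> (FP q)"
| allp: "qhc_der \<Gamma> (FP (PImp q p)) \<Longrightarrow> x \<notin> fv_p q \<Longrightarrow> qhc_der \<Gamma> (FP (PImp q (PAll x p)))"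
| exp: "qhc_der \<Gamma> (FP (PImp p q)) \<Longrightarrow> x \<notin> fv_p q \<Longrightarrow> qhc_der \<Gamma> (FP (PImp (PEx x p) q))"
| mpq: "qhc_der \<Gamma> (FQ (QImp a b)) \<Longrightarrow> qhc_der \<Gamma> (FQ a) \<Longrightarrow> qhc_der \<Gamma> (FQ b)"
| allq: "qhc_der \<Gamma> (FQ (QImp b a)) \<Longrightarrow> x \<notin> fv_q b \<Longrightarrow> qhc_der \<Gamma> (FQ (QImp b (QAll x a)))"
| exq: "qhc_der \<Gamma> (FQ (QImp a b)) \<Longrightarrow> x \<notin> fv_q b \<Longrightarrow> qhc_der \<Gamma> (FQ (QImp (QEx x a) b))"
| bang: "qhc_der \<Gamma> (FP p) \<Longrightarrow> qhc_der \<Gamma> (FQ (Bang p))"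
| quest: "qhc_der \<Gamma> (FQ a) \<Longrightarrow> qhc_der \<Gamma> (FP (Quest a))"

inductive ax_QH4 :: "fm4 \<Rightarrow> bool" where
  "ax_QH4 (Imp4 a (Imp4 b a))"
| "ax_QH4 (Imp4 (Imp4 a (Imp4 b c)) (Imp4 (Imp4 a b) (Imp4 a c)))"
| "ax_QH4 (Imp4 (And4 a b) a)"
| "ax_QH4 (Imp4 (And4 a b) b)"
| "ax_QH4 (Imp4 a (Imp4 b (And4 a b)))"
| "ax_QH4 (Imp4 a (Or4 a b))"
| "ax_QH4 (Imp4 b (Or4 a b))"
| "ax_QH4 (Imp4 (Imp4 a c) (Imp4 (Imp4 b c) (Imp4 (Or4 a b) c)))"
| "ax_QH4 (Imp4 Bot4 a)"
| "ff4 x y a \<Longrightarrow> ax_QH4 (Imp4 (All4 x a) (sb4 x y a))"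
| "ff4 x y a \<Longrightarrow> ax_QH4 (Imp4 (sb4 x y a) (Ex4 x a))"
| "ax_QH4 (Imp4 a (Nabla4 a))"
| "ax_QH4 (Imp4 (Nabla4 (Nabla4 a)) (Nabla4 a))"
| "ax_QH4 (Imp4 (Nabla4 Bot4) Bot4)"
| "ax_QH4 (Imp4 (Nabla4 (Imp4 a b)) (Imp4 (Nabla4 a) (Nabla4 b)))"

inductive qh4_der :: "fm4 set \<Rightarrow> fm4 \<Rightarrow> bool" where
  hyp4: "A \<in> \<Gamma> \<Longrightarrow> qh4_der \<Gamma> A"
| ax4: "ax_QH4 A \<Longrightarrow> qh4_der \<Gamma> A"
| mp4: "qh4_der \<Gamma> (Imp4 a b) \<Longrightarrow> qh4_der \<Gamma> a \<Longrightarrow> qh4_der \<Gamma> b"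
| all4: "qh4_der \<Gamma> (Imp4 b a) \<Longrightarrow> x \<notin> fv4 b \<Longrightarrow> qh4_der \<Gamma> (Imp4 b (All4 x a))"
| ex4: "qh4_der \<Gamma> (Imp4 a b) \<Longrightarrow> x \<notin> fv4 b \<Longrightarrow> qh4_der \<Gamma> (Imp4 (Ex4 x a) b)"

fun tr :: "fm4 \<Rightarrow> probl" where
  "tr (Var4 n ts) = QVar n ts"
| "tr Bot4 = QBot"
| "tr (And4 a b) = QAnd (tr a) (tr b)"
| "tr (Or4 a b) = QOr (tr a) (tr b)"
| "tr (Imp4 a b) = QImp (tr a) (tr b)"
| "tr (Ex4 x a) = QEx x (tr a)"
| "tr (All4 x a) = QAll x (tr a)"
| "tr (Nabla4 a) = Bang (Quest (tr a))"

text \<open>Formulas of QH: QH4 formulas without Nabla.\<close>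
fun nabla_free :: "fm4 \<Rightarrow> bool" where
  "nabla_free (Var4 n ts) = True"
| "nabla_free Bot4 = True"
| "nabla_free (And4 a b) = (nabla_free a \<and> nabla_free b)"
| "nabla_free (Or4 a b) = (nabla_free a \<and> nabla_free b)"
| "nabla_free (Imp4 a b) = (nabla_free a \<and> nabla_free b)"
| "nabla_free (Ex4 x a) = nabla_free a"
| "nabla_free (All4 x a) = nabla_free a"
| "nabla_free (Nabla4 a) = False"

text \<open>Reading a pure problem (no !, ?) of QHC as a QH formula; \<open>None\<close> if
the problem contains a type conversion.\<close>
fun as_qh :: "probl \<Rightarrow> fm4 option" where
  "as_qh (QVar n ts) = Some (Var4 n ts)"
| "as_qh QBot = Some Bot4"
| "as_qh (QAnd a b) = Option.bind (as_qh a) (\<lambda>x. map_option (And4 x) (as_qh b))"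
| "as_qh (QOr a b) = Option.bind (as_qh a) (\<lambda>x. map_option (Or4 x) (as_qh b))"
| "as_qh (QImp a b) = Option.bind (as_qh a) (\<lambda>x. map_option (Imp4 x) (as_qh b))"
| "as_qh (QEx x a) = map_option (Ex4 x) (as_qh a)"
| "as_qh (QAll x a) = map_option (All4 x) (as_qh a)"
| "as_qh (Bang p) = None"

end

theory Submission
  imports Defs
begin

text \<open>The translation commutes with free variables and substitution, so every
QH-postulate of QH4 is sent to an instance of the same QH-postulate of QHC and
the quantifier rules keep their side conditions. The four \<open>\<nabla>\<close>-postulates
become QHC-laws: \<open>\<alpha> \<rightarrow> !?\<alpha>\<close> is a schema of QHC, and the other three follow
from \<open>?!p \<rightarrow> p\<close>, \<open>?\<bottom> \<rightarrow> 0\<close> and \<open>?(\<alpha> \<rightarrow> \<beta>) \<rightarrow> (?\<alpha> \<rightarrow> ?\<beta>)\<close> by monotonicity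
of \<open>!\<close>, combined with \<open>!0 \<rightarrow> \<bottom>\<close> and \<open>!(p \<rightarrow> q) \<rightarrow> (!p \<rightarrow> !q)\<close>.\<close>

lemma fv_q_tr: "fv_q (tr a) = fv4 a"
  by (induction a) auto

lemma tr_sb4: "tr (sb4 x y a) = sb_q x y (tr a)"
  by (induction a) auto

lemma ff_q_tr: "ff_q x y (tr a) = ff4 x y a"
  by (induction a) (auto simp: fv_q_tr)

lemma qhc_QImp_trans:
  assumes "qhc_der \<Gamma> (FQ (QImp a b))" and "qhc_der \<Gamma> (FQ (QImp b c))"
  shows "qhc_der \<Gamma> (FQ (QImp a c))"
proof -
  have "qhc_der \<Gamma> (FQ (QImp a (QImp b c)))"
    using qhc_der.axq[OF ax_QH.intros(1)] assms(2) by (rule qhc_der.mpq)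
  then have "qhc_der \<Gamma> (FQ (QImp (QImp a b) (QImp a c)))"
    by (rule qhc_der.mpq[OF qhc_der.axq[OF ax_QH.intros(2)]])
  then show ?thesis
    using assms(1) by (rule qhc_der.mpq)
qed

lemma qhc_Bang_mono:
  assumes "qhc_der \<Gamma> (FP (PImp p q))"
  shows "qhc_der \<Gamma> (FQ (QImp (Bang p) (Bang q)))"
  using qhc_der.axc[OF ax_conv.intros(3)] qhc_der.bang[OF assms] by (rule qhc_der.mpq)

lemma qhc_nabla_intro: "qhc_der \<Gamma> (FQ (QImp a (Bang (Quest a))))"
  by (rule qhc_der.axc[OF ax_conv.intros(2)])

lemma qhc_nabla_idem:
  "qhc_der \<Gamma> (FQ (QImp (Bang (Quest (Bang (Quest a)))) (Bang (Quest a))))"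
  by (rule qhc_Bang_mono[OF qhc_der.axc[OF ax_conv.intros(1)]])

lemma qhc_nabla_QBot: "qhc_der \<Gamma> (FQ (QImp (Bang (Quest QBot)) QBot))"
  using qhc_Bang_mono[OF qhc_der.axc[OF ax_conv.intros(8)]] qhc_der.axc[OF ax_conv.intros(5)]
  by (rule qhc_QImp_trans)

lemma qhc_nabla_K:
  "qhc_der \<Gamma> (FQ (QImp (Bang (Quest (QImp a b)))
                      (QImp (Bang (Quest a)) (Bang (Quest b)))))"
  using qhc_Bang_mono[OF qhc_der.axc[OF ax_conv.intros(4)]] qhc_der.axc[OF ax_conv.intros(3)]
  by (rule qhc_QImp_trans)

lemma qhc_der_tr_ax_QH4:
  assumes "ax_QH4 A"
  shows "qhc_der \<Gamma> (FQ (tr A))"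
  using assms
proof (induction rule: ax_QH4.induct)
  case (10 x y a)
  then show ?case
    using qhc_der.axq[OF ax_QH.intros(10)[of x y "tr a"]] by (simp add: tr_sb4 ff_q_tr)
next
  case (11 x y a)
  then show ?case
    using qhc_der.axq[OF ax_QH.intros(11)[of x y "tr a"]] by (simp add: tr_sb4 ff_q_tr)
qed (simp_all add: qhc_nabla_intro qhc_nabla_idem qhc_nabla_QBot qhc_nabla_K
                   qhc_der.axq ax_QH.intros)

lemma qhc_der_tr:
  assumes "qh4_der \<Gamma> A"
  shows "qhc_der ((\<lambda>B. FQ (tr B)) ` \<Gamma>) (FQ (tr A))"
  using assms
proof (induction rule: qh4_der.induct)
  case (hyp4 A \<Gamma>)
  then show ?case by (simp add: qhc_der.hyp)
next
  case (ax4 A \<Gamma>)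
  then show ?case by (rule qhc_der_tr_ax_QH4)
next
  case (mp4 \<Gamma> a b)
  then show ?case by (simp add: qhc_der.mpq)
next
  case (all4 \<Gamma> b a x)
  then show ?case by (simp add: qhc_der.allq fv_q_tr)
next
  case (ex4 \<Gamma> a b x)
  then show ?case by (simp add: qhc_der.exq fv_q_tr)
qed

lemma as_qh_tr: "nabla_free A \<Longrightarrow> as_qh (tr A) = Some A"
  by (induction A) auto

theorem proposition2p4:
  shows "(\<forall>A. qh4_der {} A \<longrightarrow> qhc_der {} (FQ (tr A)))
       \<and> (\<forall>\<Gamma> A. qh4_der \<Gamma> A \<longrightarrow> qhc_der ((\<lambda>B. FQ (tr B)) ` \<Gamma>) (FQ (tr A)))
       \<and> (\<forall>A. nabla_free A \<longrightarrow> as_qh (tr A) = Some A)"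
  using qhc_der_tr[of "{}"] qhc_der_tr as_qh_tr by auto

end
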